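(* The class of probe $P_5$-free graphs is a proper subclass of the class of $(C_7,C_9,C_{11},\ldots)$-free graphs; that is, every probe $P_5$-free graph contains no induced odd cycle of length at least $7$, and there exists a graph containing no induced odd cycle of length at least $7$ that is not probe $P_5$-free.
   Context: All graphs are finite and simple. $C_n$ is the cycle on $n$ vertices and $P_5$ the path on $5$ vertices. A graph is $H$-free if it has no induced subgraph isomorphic to $H$; $(C_7,C_9,C_{11},\ldots)$-free means $C_{2\ell+1}$-free for all $\ell\geq 3$. A graph $G=(V,E)$ is probe $P_5$-free if there is an independent set $N$ of $G$ and a set $F\subseteq\binom{N}{2}$ such that $(V,E\cup F)$ is $P_5$-free. *)

theory Defs
  imports Main
begin

definition simple_graph :: "'a set \<Rightarrow> 'a set set \<Rightarrow> bool" where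
  "simple_graph V E \<longleftrightarrow> finite V \<and>
     (\<forall>e\<in>E. \<exists>u v. e = {u, v} \<and> u \<noteq> v \<and> u \<in> V \<and> v \<in> V)"

definition has_induced :: "'a set \<Rightarrow> 'a set set \<Rightarrow> 'b set \<Rightarrow> 'b set set \<Rightarrow> bool" where
  "has_induced V E W F \<longleftrightarrow> (\<exists>f. inj_on f W \<and> f ` W \<subseteq> V \<and>
     (\<forall>x\<in>W. \<forall>y\<in>W. x \<noteq> y \<longrightarrow> ({f x, f y} \<in> E \<longleftrightarrow> {x, y} \<in> F)))"

definition H_free :: "'a set \<Rightarrow> 'a set set \<Rightarrow> 'b set \<Rightarrow> 'b set set \<Rightarrow> bool" where
  "H_free V E W F \<longleftrightarrow> \<not> has_induced V E W F"

definition cycle_V :: "nat \<Rightarrow> nat set" where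
  "cycle_V n = {0..<n}"
definition cycle_E :: "nat \<Rightarrow> nat set set" where
  "cycle_E n = {{i, (i + 1) mod n} | i. i < n}"

definition path_V :: "nat \<Rightarrow> nat set" where
  "path_V n = {0..<n}"
definition path_E :: "nat \<Rightarrow> nat set set" where
  "path_E n = {{i, Suc i} | i. Suc i < n}"

definition long_odd_cycle_free :: "'a set \<Rightarrow> 'a set set \<Rightarrow> bool" where
  "long_odd_cycle_free V E \<longleftrightarrow>
     (\<forall>l::nat. l \<ge> 3 \<longrightarrow> H_free V E (cycle_V (2*l+1)) (cycle_E (2*l+1)))"

definition independent_set :: "'a set \<Rightarrow> 'a set set \<Rightarrow> 'a set \<Rightarrow> bool" where
  "independent_set V E N \<longleftrightarrow> N \<subseteq> V \<and> (\<forall>u\<in>N. \<forall>v\<in>N. {u, v} \<notin> E)"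

definition probe_P5_free :: "'a set \<Rightarrow> 'a set set \<Rightarrow> bool" where
  "probe_P5_free V E \<longleftrightarrow> (\<exists>N F. independent_set V E N \<and>
     F \<subseteq> {{u, v} | u v. u \<in> N \<and> v \<in> N \<and> u \<noteq> v} \<and>
     H_free V (E \<union> F) (path_V 5) (path_E 5))"

end

(*
  Completing a probe graph only adds edges between vertices of the independent set N,
  and N contains no two consecutive vertices of an induced cycle. On an odd cycle this
  forces two consecutive vertices outside N. Around them, a case analysis on which nearby
  vertices lie in N and which of their pairs were completed always exhibits an induced P5
  in the completion, possibly running along one or two completed pairs; a cycle length of
  at least 7 keeps the eight vertices involved free of further chords.

  Conversely, the 6-cycle with a triangle glued onto one edge has only seven vertices, one
  of them of degree three, so it contains no induced C7 or longer odd cycle; yet every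
  choice of N and F leaves an induced P5.
*)

theory Submission
  imports Defs
begin

lemma mod_add_neq_self:
  fixes a t n :: nat
  assumes "0 < t" "t < n"
  shows "(a + t) mod n \<noteq> a mod n"
proof
  assume "(a + t) mod n = a mod n"
  then have "n dvd t"
    using mod_eq_dvd_iff_nat[of a "a + t" n] by simp
  with assms show False
    by (auto dest: dvd_imp_le)
qed

lemma cycle_E_mod_iff:
  assumes "0 < n"
  shows "{a mod n, c mod n} \<in> cycle_E n \<longleftrightarrow> c mod n = Suc a mod n \<or> a mod n = Suc c mod n"
proof
  assume "{a mod n, c mod n} \<in> cycle_E n"
  then obtain k where "k < n" "{a mod n, c mod n} = {k, Suc k mod n}"
    unfolding cycle_E_def by auto
  then show "c mod n = Suc a mod n \<or> a mod n = Suc c mod n"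
    by (auto simp: doubleton_eq_iff mod_Suc_eq)
next
  assume "c mod n = Suc a mod n \<or> a mod n = Suc c mod n"
  then have "{a mod n, c mod n} = {a mod n, Suc (a mod n) mod n} \<or>
             {a mod n, c mod n} = {c mod n, Suc (c mod n) mod n}"
    by (auto simp: mod_Suc_eq)
  with assms show "{a mod n, c mod n} \<in> cycle_E n"
    unfolding cycle_E_def by fastforce
qed

lemma cycle_E_window:
  assumes "i < j" "j + 2 \<le> i + n"
  shows "(b + i) mod n \<noteq> (b + j) mod n \<and>
    ({(b + i) mod n, (b + j) mod n} \<in> cycle_E n \<longleftrightarrow> j = Suc i)"
proof -
  obtain d where j: "j = Suc i + d"
    using assms(1) less_iff_Suc_add by blast
  have "(b + i + Suc d) mod n \<noteq> (b + i) mod n"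
    by (rule mod_add_neq_self) (use assms j in auto)
  moreover have "(Suc (b + i) + d) mod n \<noteq> Suc (b + i) mod n" if "d \<noteq> 0"
    by (rule mod_add_neq_self) (use assms j that in auto)
  moreover have "(b + i + Suc (Suc d)) mod n \<noteq> (b + i) mod n"
    by (rule mod_add_neq_self) (use assms j in auto)
  ultimately show ?thesis
    using assms j by (auto simp: cycle_E_mod_iff mod_Suc_eq ac_simps)
qed

lemma odd_cycle_two_consecutive_outside:
  fixes M :: "nat set"
  assumes "odd n" and no_consecutive: "\<And>i. i < n \<Longrightarrow> i \<in> M \<Longrightarrow> Suc i mod n \<notin> M"
  shows "\<exists>i<n. i \<notin> M \<and> Suc i mod n \<notin> M"
proof (rule ccontr)
  assume "\<not> ?thesis"
  with no_consecutive have alternate: "Suc i mod n \<in> M \<longleftrightarrow> i \<notin> M" if "i < n" for i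
    using that by blast
  have "i mod n \<in> M \<longleftrightarrow> (0 \<in> M \<longleftrightarrow> even i)" if "i \<le> n" for i
    using that
  proof (induction i)
    case (Suc i)
    then have "i < n" by simp
    with Suc.IH alternate[of i] show ?case by simp
  qed simp
  from this[of n] \<open>odd n\<close> show False by simp
qed

lemma has_induced_P5I:
  assumes "distinct [a, b, c, d, e]" "{a, b, c, d, e} \<subseteq> V"
    "{a, b} \<in> E" "{b, c} \<in> E" "{c, d} \<in> E" "{d, e} \<in> E"
    "{a, c} \<notin> E" "{a, d} \<notin> E" "{a, e} \<notin> E" "{b, d} \<notin> E" "{b, e} \<notin> E" "{c, e} \<notin> E"
  shows "has_induced V E (path_V 5) (path_E 5)"
  unfolding has_induced_def
proof (intro exI[of _ "\<lambda>i. [a, b, c, d, e] ! i"] conjI ballI impI)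
  have V5: "path_V 5 = {0, 1, 2, 3, 4}" by (auto simp: path_V_def)
  have E5: "{x, y} \<in> path_E 5 \<longleftrightarrow> (y = Suc x \<and> Suc x < 5) \<or> (x = Suc y \<and> Suc y < 5)" for x y
    unfolding path_E_def by (auto simp: doubleton_eq_iff)
  show "inj_on (\<lambda>i. [a, b, c, d, e] ! i) (path_V 5)"
    using assms(1) unfolding V5 inj_on_def by auto
  show "(\<lambda>i. [a, b, c, d, e] ! i) ` path_V 5 \<subseteq> V"
    using assms(2) unfolding V5 by auto
  fix x y assume "x \<in> path_V 5" "y \<in> path_V 5" "x \<noteq> y"
  then have "x \<in> {0, 1, 2, 3, 4}" "y \<in> {0, 1, 2, 3, 4}" "x \<noteq> y" unfolding V5 by auto
  then show "{[a, b, c, d, e] ! x, [a, b, c, d, e] ! y} \<in> E \<longleftrightarrow> {x, y} \<in> path_E 5"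
    unfolding E5 using assms(3-) by (elim insertE; simp add: insert_commute)+
qed

lemma probe_edge_notin:
  assumes "F \<subseteq> {{u, v} | u v. u \<in> N \<and> v \<in> N \<and> u \<noteq> v}" and "x \<notin> N \<or> y \<notin> N"
  shows "{x, y} \<notin> F"
  using assms by (auto simp: doubleton_eq_iff)

text \<open>Only vertices at most five steps apart along c are constrained, so c 0 = c 7 is
  allowed and c may run once around an induced C7.\<close>
lemma probe_completion_has_P5:
  fixes c :: "nat \<Rightarrow> 'a"
  assumes walk: "\<And>i j. i < j \<Longrightarrow> j \<le> i + 5 \<Longrightarrow> c i \<noteq> c j \<and> ({c i, c j} \<in> E \<longleftrightarrow> j = Suc i)"
    and c_V: "\<And>k. c k \<in> V"
    and N: "independent_set V E N"
    and F: "F \<subseteq> {{u, v} | u v. u \<in> N \<and> v \<in> N \<and> u \<noteq> v}"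
    and c4: "c 4 \<notin> N" and c5: "c 5 \<notin> N"
  shows "has_induced V (E \<union> F) (path_V 5) (path_E 5)"
proof -
  have walk_E: "{c i, c j} \<in> E \<longleftrightarrow> j = Suc i" "{c j, c i} \<in> E \<longleftrightarrow> j = Suc i"
    if "i < j" "j \<le> i + 5" for i j
    using walk[OF that] by (auto simp: insert_commute)
  have walk_distinct: "c i \<noteq> c j" "c j \<noteq> c i" if "i < j" "j \<le> i + 5" for i j
    using walk[OF that] by auto
  have N_no_consecutive: "\<not> (c k \<in> N \<and> c (Suc k) \<in> N)" for k
    using N walk[of k "Suc k"] unfolding independent_set_def by auto
  note facts = walk_E walk_distinct probe_edge_notin[OF F] c_V c4 c5
  show ?thesis
  proof (cases "c 3 \<in> N")
    case False
    show ?thesis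
      by (rule has_induced_P5I[of "c 3" "c 4" "c 5" "c 6" "c 7"])
        (simp_all add: facts False del: One_nat_def)
  next
    case c3: True
    then have c2: "c 2 \<notin> N" using N_no_consecutive[of 2] by simp
    show ?thesis
    proof (cases "{c 3, c 6} \<in> F")
      case False
      show ?thesis
        by (rule has_induced_P5I[of "c 2" "c 3" "c 4" "c 5" "c 6"])
          (simp_all add: facts c2 False del: One_nat_def)
    next
      case True
      then have F36: "{c 3, c 6} \<in> F" "{c 6, c 3} \<in> F"
        by (simp_all add: insert_commute)
      show ?thesis
      proof (cases "c 1 \<in> N")
        case False
        show ?thesis
          by (rule has_induced_P5I[of "c 5" "c 6" "c 3" "c 2" "c 1"])
            (simp_all add: facts c2 F36 False del: One_nat_def)
      next
        case c1: True
        then have c0: "c 0 \<notin> N" using N_no_consecutive[of 0] by simp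
        show ?thesis
        proof (cases "{c 1, c 3} \<in> F")
          case False
          show ?thesis
            by (rule has_induced_P5I[of "c 1" "c 2" "c 3" "c 4" "c 5"])
              (simp_all add: facts c2 False del: One_nat_def)
        next
          case True
          then have F31: "{c 3, c 1} \<in> F" by (simp add: insert_commute)
          show ?thesis
            by (rule has_induced_P5I[of "c 5" "c 4" "c 3" "c 1" "c 0"])
              (simp_all add: facts c0 F31 del: One_nat_def)
        qed
      qed
    qed
  qed
qed

lemma induced_cycle_walk:
  assumes g_inj: "inj_on g {0..<n}"
    and g_E: "\<forall>x\<in>{0..<n}. \<forall>y\<in>{0..<n}. x \<noteq> y \<longrightarrow> ({g x, g y} \<in> E \<longleftrightarrow> {x, y} \<in> cycle_E n)"
    and "i < j" "j + 2 \<le> i + n"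
  shows "g ((b + i) mod n) \<noteq> g ((b + j) mod n) \<and>
    ({g ((b + i) mod n), g ((b + j) mod n)} \<in> E \<longleftrightarrow> j = Suc i)"
proof -
  have "0 < n" using assms(3,4) by simp
  then have "(b + i) mod n \<in> {0..<n}" "(b + j) mod n \<in> {0..<n}" by simp_all
  with cycle_E_window[OF assms(3,4), of b] g_E inj_onD[OF g_inj] show ?thesis by metis
qed

lemma probe_P5_free_imp_long_odd_cycle_free:
  assumes "probe_P5_free V E"
  shows "long_odd_cycle_free V E"
  unfolding long_odd_cycle_free_def H_free_def
proof (intro allI impI notI)
  obtain N F where N: "independent_set V E N"
    and F: "F \<subseteq> {{u, v} | u v. u \<in> N \<and> v \<in> N \<and> u \<noteq> v}"
    and P5_free: "\<not> has_induced V (E \<union> F) (path_V 5) (path_E 5)"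
    using assms unfolding probe_P5_free_def H_free_def by blast
  fix l :: nat
  define n where "n = 2 * l + 1"
  assume "3 \<le> l" and "has_induced V E (cycle_V (2 * l + 1)) (cycle_E (2 * l + 1))"
  then have "7 \<le> n" "odd n" and "has_induced V E (cycle_V n) (cycle_E n)"
    by (simp_all add: n_def)
  then obtain g where g_inj: "inj_on g {0..<n}" and g_V: "g ` {0..<n} \<subseteq> V"
    and g_E: "\<forall>x\<in>{0..<n}. \<forall>y\<in>{0..<n}. x \<noteq> y \<longrightarrow> ({g x, g y} \<in> E \<longleftrightarrow> {x, y} \<in> cycle_E n)"
    unfolding has_induced_def cycle_V_def by blast
  note walk = induced_cycle_walk[OF g_inj g_E]
  have "\<exists>i<n. g i \<notin> N \<and> g (Suc i mod n) \<notin> N"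
  proof (rule odd_cycle_two_consecutive_outside[of n "{i. g i \<in> N}", simplified])
    show "odd n" by fact
    show "g (Suc i mod n) \<notin> N" if "i < n" "g i \<in> N" for i
      using walk[of 0 1 i] N that \<open>7 \<le> n\<close> unfolding independent_set_def by auto
  qed
  then obtain i where "i < n" "g i \<notin> N" "g (Suc i mod n) \<notin> N" by blast
  define c where "c k = g ((i + n - 4 + k) mod n)" for k
  have "has_induced V (E \<union> F) (path_V 5) (path_E 5)"
  proof (rule probe_completion_has_P5[OF _ _ N F])
    show "c k \<noteq> c m \<and> ({c k, c m} \<in> E \<longleftrightarrow> m = Suc k)" if "k < m" "m \<le> k + 5" for k m
      unfolding c_def by (rule walk) (use that \<open>7 \<le> n\<close> in auto)
    show "c k \<in> V" for k
      unfolding c_def using g_V \<open>7 \<le> n\<close> by auto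
    have "i + n - 4 + 4 = i + n" "i + n - 4 + 5 = Suc i + n"
      using \<open>7 \<le> n\<close> by simp_all
    then have "(i + n - 4 + 4) mod n = i" "(i + n - 4 + 5) mod n = Suc i mod n"
      using \<open>i < n\<close> by (simp, metis mod_add_self2)
    then show "c 4 \<notin> N" "c 5 \<notin> N"
      unfolding c_def using \<open>g i \<notin> N\<close> \<open>g (Suc i mod n) \<notin> N\<close> by simp_all
  qed
  with P5_free show False by contradiction
qed

lemma inj_on_Suc_mod: "inj_on (\<lambda>x. Suc x mod n) {0..<n}"
proof -
  have "Suc x mod n \<noteq> Suc y mod n" if "x < y" "y < n" for x y
  proof -
    have "(Suc x + (y - x)) mod n \<noteq> Suc x mod n"
      by (rule mod_add_neq_self) (use that in auto)
    with that show ?thesis by simp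
  qed
  then show ?thesis
    by (intro inj_onI) (metis atLeastLessThan_iff linorder_neqE_nat)
qed

lemma not_has_induced_cycle_if_degree_three:
  assumes "finite V" "card V \<le> n"
    and "distinct [v, u\<^sub>1, u\<^sub>2, u\<^sub>3]" "{v, u\<^sub>1, u\<^sub>2, u\<^sub>3} \<subseteq> V"
    and "{v, u\<^sub>1} \<in> E" "{v, u\<^sub>2} \<in> E" "{v, u\<^sub>3} \<in> E"
  shows "\<not> has_induced V E (cycle_V n) (cycle_E n)"
proof
  assume "has_induced V E (cycle_V n) (cycle_E n)"
  then obtain f where f_inj: "inj_on f {0..<n}" and f_V: "f ` {0..<n} \<subseteq> V"
    and f_E: "\<forall>x\<in>{0..<n}. \<forall>y\<in>{0..<n}. x \<noteq> y \<longrightarrow> ({f x, f y} \<in> E \<longleftrightarrow> {x, y} \<in> cycle_E n)"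
    unfolding has_induced_def cycle_V_def by blast
  have "f ` {0..<n} = V"
    using f_V by (rule card_subset_eq[OF \<open>finite V\<close>])
      (use card_image[OF f_inj] card_mono[OF \<open>finite V\<close> f_V] assms(2) in simp)
  then have preimage: "\<exists>k<n. f k = w" if "w \<in> V" for w
    using that by force
  obtain k k\<^sub>1 k\<^sub>2 k\<^sub>3 where k: "k < n" "k\<^sub>1 < n" "k\<^sub>2 < n" "k\<^sub>3 < n"
    and f_k: "f k = v" "f k\<^sub>1 = u\<^sub>1" "f k\<^sub>2 = u\<^sub>2" "f k\<^sub>3 = u\<^sub>3"
    using preimage[of v] preimage[of u\<^sub>1] preimage[of u\<^sub>2] preimage[of u\<^sub>3] assms(4) by auto
  have cycle_neighbour: "k' = Suc k mod n \<or> k = Suc k' mod n"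
    if "k' < n" "f k' \<noteq> v" "{v, f k'} \<in> E" for k'
  proof -
    have "k \<noteq> k'" using that(2) f_k(1) by auto
    then have "{f k, f k'} \<in> E \<longleftrightarrow> {k, k'} \<in> cycle_E n"
      using f_E k(1) that(1) by simp
    then have "{k, k'} \<in> cycle_E n"
      using that(3) f_k(1) by simp
    then show ?thesis
      using cycle_E_mod_iff[of n k k'] that(1) k(1) by simp
  qed
  have "k\<^sub>1 = Suc k mod n \<or> k = Suc k\<^sub>1 mod n"
    by (rule cycle_neighbour) (use k f_k assms(3,5) in auto)
  moreover have "k\<^sub>2 = Suc k mod n \<or> k = Suc k\<^sub>2 mod n"
    by (rule cycle_neighbour) (use k f_k assms(3,6) in auto)
  moreover have "k\<^sub>3 = Suc k mod n \<or> k = Suc k\<^sub>3 mod n"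
    by (rule cycle_neighbour) (use k f_k assms(3,7) in auto)
  moreover have "k\<^sub>1 \<noteq> k\<^sub>2" "k\<^sub>1 \<noteq> k\<^sub>3" "k\<^sub>2 \<noteq> k\<^sub>3"
    using assms(3) f_k by auto
  moreover have "x = y" if "Suc x mod n = Suc y mod n" "x < n" "y < n" for x y
    using inj_onD[OF inj_on_Suc_mod that(1)] that(2,3) by simp
  ultimately show False
    using k by metis
qed

text \<open>The 6-cycle 0-1-4-6-5-3 with the vertex 2 attached to both ends of its edge 01.\<close>
definition witness_V :: "nat set" where
  "witness_V = {0, 1, 2, 3, 4, 5, 6}"

definition witness_E :: "nat set set" where
  "witness_E = {{0, 1}, {0, 2}, {0, 3}, {1, 2}, {1, 4}, {3, 5}, {4, 6}, {5, 6}}"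

lemma simple_graph_witness: "simple_graph witness_V witness_E"
  unfolding simple_graph_def witness_V_def witness_E_def by (auto intro!: exI)

lemma long_odd_cycle_free_witness: "long_odd_cycle_free witness_V witness_E"
  unfolding long_odd_cycle_free_def H_free_def
proof (intro allI impI)
  fix l :: nat
  assume "3 \<le> l"
  then show "\<not> has_induced witness_V witness_E (cycle_V (2 * l + 1)) (cycle_E (2 * l + 1))"
    by (intro not_has_induced_cycle_if_degree_three[of _ _ 0 1 2 3])
      (auto simp: witness_V_def witness_E_def)
qed

lemma not_probe_P5_free_witness: "\<not> probe_P5_free witness_V witness_E"
  unfolding probe_P5_free_def H_free_def
proof (intro notI, elim exE conjE)
  fix N F
  assume N: "independent_set witness_V witness_E N"
    and F: "F \<subseteq> {{u, v} | u v. u \<in> N \<and> v \<in> N \<and> u \<noteq> v}"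
    and P5_free: "\<not> has_induced witness_V (witness_E \<union> F) (path_V 5) (path_E 5)"
  have N_nonadjacent: "v \<notin> N" if "u \<in> N" "{u, v} \<in> witness_E" for u v
    using N that unfolding independent_set_def by blast
  note facts = witness_V_def witness_E_def doubleton_eq_iff probe_edge_notin[OF F]
  have "has_induced witness_V (witness_E \<union> F) (path_V 5) (path_E 5)"
  proof (cases "0 \<in> N")
    case True
    then have n123: "1 \<notin> N" "2 \<notin> N" "3 \<notin> N"
      using N_nonadjacent by (auto simp: witness_E_def)
    show ?thesis
    proof (cases "{4, 5} \<in> F")
      case True
      show ?thesis
        by (rule has_induced_P5I[of 2 1 4 5 3]) (simp_all add: facts n123 True del: One_nat_def)
    next
      case False
      show ?thesis
        by (rule has_induced_P5I[of 1 4 6 5 3]) (simp_all add: facts n123 False del: One_nat_def)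
    qed
  next
    case n0: False
    show ?thesis
    proof (cases "1 \<in> N")
      case True
      then have n24: "2 \<notin> N" "4 \<notin> N"
        using N_nonadjacent by (auto simp: witness_E_def)
      show ?thesis
      proof (cases "{3, 6} \<in> F")
        case True
        show ?thesis
          by (rule has_induced_P5I[of 2 0 3 6 4]) (simp_all add: facts n0 n24 True del: One_nat_def)
      next
        case False
        show ?thesis
          by (rule has_induced_P5I[of 0 3 5 6 4]) (simp_all add: facts n0 n24 False del: One_nat_def)
      qed
    next
      case n1: False
      show ?thesis
      proof (cases "3 \<in> N")
        case True
        then have n5: "5 \<notin> N"
          using N_nonadjacent by (auto simp: witness_E_def)
        show ?thesis
          by (rule has_induced_P5I[of 0 1 4 6 5]) (simp_all add: facts n0 n1 n5 del: One_nat_def)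
      next
        case n3: False
        show ?thesis
          by (rule has_induced_P5I[of 1 0 3 5 6]) (simp_all add: facts n0 n1 n3 del: One_nat_def)
      qed
    qed
  qed
  with P5_free show False by contradiction
qed

theorem mainTheorem10:
  shows "(\<forall>(V :: 'a set) E. simple_graph V E \<and> probe_P5_free V E \<longrightarrow> long_odd_cycle_free V E)
     \<and> (\<exists>(V :: nat set) E. simple_graph V E \<and> long_odd_cycle_free V E \<and> \<not> probe_P5_free V E)"
  using probe_P5_free_imp_long_odd_cycle_free
    simple_graph_witness long_odd_cycle_free_witness not_probe_P5_free_witness
  by blast

end
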